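(* Let $x^1,\dots,x^{\ell_1},\hat x^1,\dots,\hat x^{\ell_2}\in\mathbb{R}^n$ with $\ell_1\ge1$, let $\mathcal{P}=\{\sum_{i=1}^{\ell_1}\theta_ix^i+\sum_{j=1}^{\ell_2}\hat\theta_j\hat x^j:\theta_i\ge0,\ \sum_i\theta_i=1,\ \hat\theta_j\ge0\}$, let $X=[x^1,\dots,x^{\ell_1},\hat x^1,\dots,\hat x^{\ell_2}]\in\mathbb{R}^{n\times(\ell_1+\ell_2)}$, and let $A\in\mathbb{R}^{n\times n}$. Then $\mathcal{P}$ is an invariant set for the continuous system $\dot x(t)=Ax(t)$ if and only if there exists a matrix $\tilde L\in\mathbb{R}^{(\ell_1+\ell_2)\times(\ell_1+\ell_2)}$ whose off-diagonal entries are all nonnegative such that $X\tilde L=AX$ and $\bar 1\tilde L=0$, where $\bar 1=(1,\dots,1,0,\dots,0)$ is the row vector with $\ell_1$ ones followed by $\ell_2$ zeros (i.e., in every column of $\tilde L$ the first $\ell_1$ entries sum to zero).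
   Context: A set $\mathcal{S}\subseteq\mathbb{R}^n$ is an invariant set for the continuous system $\dot x=Ax$ if $x(0)\in\mathcal{S}$ implies $x(t)\in\mathcal{S}$ for all $t\ge 0$; equivalently $e^{At}\mathcal{S}\subseteq\mathcal{S}$ for all $t\ge0$. *)

theory Defs
  imports "HOL-Analysis.Analysis"
begin

definition lin_solution :: "real^'n^'n \<Rightarrow> (real \<Rightarrow> real^'n) \<Rightarrow> bool" where
  "lin_solution A x \<longleftrightarrow>
     (\<forall>t\<ge>0. (x has_vector_derivative (A *v x t)) (at t within {0..}))"

definition invariant_set :: "real^'n^'n \<Rightarrow> (real^'n) set \<Rightarrow> bool" where
  "invariant_set A S \<longleftrightarrow>
     (\<forall>x. lin_solution A x \<longrightarrow> x 0 \<in> S \<longrightarrow> (\<forall>t\<ge>0. x t \<in> S))"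

definition poly_set :: "nat \<Rightarrow> nat \<Rightarrow> (nat \<Rightarrow> real^'n) \<Rightarrow> (nat \<Rightarrow> real^'n) \<Rightarrow> (real^'n) set" where
  "poly_set l1 l2 x xh =
     {(\<Sum>i<l1. \<theta> i *\<^sub>R x i) + (\<Sum>j<l2. \<theta>h j *\<^sub>R xh j) | \<theta> \<theta>h.
        (\<forall>i<l1. \<theta> i \<ge> 0) \<and> (\<Sum>i<l1. \<theta> i) = 1 \<and> (\<forall>j<l2. \<theta>h j \<ge> 0)}"

text \<open>Column k (k < l1 + l2) of the matrix X = [x^1 ... x^l1, xh^1 ... xh^l2].\<close>
definition Xcol :: "nat \<Rightarrow> (nat \<Rightarrow> real^'n) \<Rightarrow> (nat \<Rightarrow> real^'n) \<Rightarrow> nat \<Rightarrow> real^'n" where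
  "Xcol l1 x xh k = (if k < l1 then x k else xh (k - l1))"

end

theory Submission
  imports Defs
begin

(* Homogenise the polyhedron P = conv{x_i} + cone{xh_j}: in R^n x R it is the
   slice at height 1 of the finitely generated cone K spanned by the vectors (x_i, 1) and
   (xh_j, 0), i.e. by the columns of X stacked over the row vector (1,...,1,0,...,0).  The flow of
   x' = A x lifts to the flow of the operator (v, r) |-> (A v, 0), which fixes the last coordinate.
   The proof then has four steps:
   (1) P is invariant iff the matrix exponential exp (t A) maps P into P for t >= 0
       (existence and uniqueness of solutions of linear ODEs, via the exponential in the Banach
       algebra of bounded linear endomorphisms);
   (2) exp (t A) maps P into P iff the lifted flow maps K into K (rescaling; the boundary
       K \<inter> {r = 0} is reached as a limit, which needs a vertex, i.e. l1 >= 1);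
   (3) a general theorem on finitely generated cones: exp (t M) g-cone \<subseteq> g-cone for all t >= 0
       iff M g_j = \<Sum>i. L_ij g_i for a Metzler matrix L (nonnegative off-diagonal entries);
   (4) for the lifted operator and the stacked generators, the identity M g_j = \<Sum>i. L_ij g_i is
       exactly X L = A X together with the vanishing of the first l1 entries of every column sum. *)

text \<open>Bounded linear endomorphisms of a normed space, as a Banach algebra under composition;
  this gives the matrix exponential together with its library theory.\<close>

typedef (overloaded) 'a endo = "UNIV :: ('a::real_normed_vector \<Rightarrow>\<^sub>L 'a) set"
  morphisms eop Endo by simp

setup_lifting type_definition_endo

instantiation endo :: (real_normed_vector) real_normed_vector
begin
lift_definition norm_endo :: "'a endo \<Rightarrow> real" is norm .
lift_definition minus_endo :: "'a endo \<Rightarrow> 'a endo \<Rightarrow> 'a endo" is "(-)" .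
lift_definition plus_endo :: "'a endo \<Rightarrow> 'a endo \<Rightarrow> 'a endo" is "(+)" .
lift_definition uminus_endo :: "'a endo \<Rightarrow> 'a endo" is "uminus" .
lift_definition zero_endo :: "'a endo" is "0" .
lift_definition scaleR_endo :: "real \<Rightarrow> 'a endo \<Rightarrow> 'a endo" is "scaleR" .
definition dist_endo :: "'a endo \<Rightarrow> 'a endo \<Rightarrow> real"
  where "dist_endo a b = norm (a - b)"
definition uniformity_endo :: "('a endo \<times> 'a endo) filter"
  where "uniformity_endo = (INF e\<in>{0 <..}. principal {(x, y). dist x y < e})"
definition open_endo :: "'a endo set \<Rightarrow> bool"
  where "open_endo S = (\<forall>x\<in>S. \<forall>\<^sub>F (x', y) in uniformity. x' = x \<longrightarrow> y \<in> S)"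
definition sgn_endo :: "'a endo \<Rightarrow> 'a endo"
  where "sgn_endo x = scaleR (inverse (norm x)) x"
instance
  apply standard
  unfolding dist_endo_def open_endo_def sgn_endo_def uniformity_endo_def
  apply (rule refl | (transfer, force simp: norm_triangle_ineq algebra_simps scaleR_add_right scaleR_add_left))+
  done
end

instantiation endo :: (euclidean_space) real_normed_algebra_1
begin
lift_definition times_endo :: "'a endo \<Rightarrow> 'a endo \<Rightarrow> 'a endo" is "(o\<^sub>L)" .
lift_definition one_endo :: "'a endo" is "id_blinfun" .
instance
  apply standard
  apply (transfer; rule blinfun_eqI; simp add: blinfun.bilinear_simps)+
  subgoal by transfer (metis SOME_Basis blinfun.zero_left blinfun_apply_id_blinfun nonzero_Basis)
  subgoal by transfer (rule norm_blinfun_compose)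
  subgoal by transfer simp
  done
end

lemma dist_eop: "dist (eop a) (eop b) = dist a b"
  unfolding dist_endo_def dist_norm by transfer simp

instance endo :: (banach) banach
proof
  fix X :: "nat \<Rightarrow> 'a endo"
  assume "Cauchy X"
  then have "Cauchy (\<lambda>n. eop (X n))" unfolding Cauchy_def dist_eop .
  then obtain l where l: "(\<lambda>n. eop (X n)) \<longlonglongrightarrow> l"
    using Cauchy_convergent_iff convergent_def by blast
  have "dist (X n) (Endo l) = dist (eop (X n)) l" for n
    by (metis dist_eop Endo_inverse UNIV_I)
  then have "X \<longlonglongrightarrow> Endo l" using l unfolding tendsto_iff by simp
  then show "convergent X" unfolding convergent_def by blast
qed

lemma eop_mult: "eop (a * b) v = eop a (eop b v)" by transfer simp
lemma eop_one: "eop 1 v = v" by transfer simp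
lemma eop_add: "eop (a + b) v = eop a v + eop b v" by transfer (rule blinfun.add_left)
lemma eop_minus: "eop (- a) v = - eop a v" by transfer (rule blinfun.minus_left)
lemma eop_scaleR: "eop (c *\<^sub>R a) v = c *\<^sub>R eop a v" by transfer (rule blinfun.scaleR_left)

lemma norm_eop: "norm (eop a v) \<le> norm a * norm v" by transfer (rule norm_blinfun)

lemma bounded_bilinear_eop: "bounded_bilinear (\<lambda>a v. eop a v)"
proof (rule bounded_bilinear.intro)
  show "\<exists>K. \<forall>a v. norm (eop a v) \<le> norm a * norm v * K"
    by (intro exI[of _ 1]) (simp add: norm_eop)
qed (simp_all add: eop_add eop_scaleR blinfun.add_right blinfun.scaleR_right)

lemma bounded_linear_eop: "bounded_linear (\<lambda>a. eop a v)"
  using bounded_bilinear.bounded_linear_left[OF bounded_bilinear_eop] .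

definition lin_flow :: "'a::euclidean_space endo \<Rightarrow> real \<Rightarrow> 'a \<Rightarrow> 'a" where
  "lin_flow M t v = eop (exp (t *\<^sub>R M)) v"

lemma lin_flow_0 [simp]: "lin_flow M 0 v = v"
  by (simp add: lin_flow_def eop_one)

lemma lin_flow_has_derivative:
  "((\<lambda>t. lin_flow M t v) has_vector_derivative eop M (lin_flow M t v)) (at t within S)"
proof -
  have "((\<lambda>t. exp (t *\<^sub>R M)) has_vector_derivative M * exp (t *\<^sub>R M)) (at t within S)"
    using exp_scaleR_has_vector_derivative_left has_vector_derivative_at_within by blast
  from bounded_linear.has_vector_derivative[OF bounded_linear_eop this, of v]
  show ?thesis by (simp add: lin_flow_def eop_mult)
qed

lemma lin_flow_scaleR: "lin_flow M t (c *\<^sub>R v) = c *\<^sub>R lin_flow M t v"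
  by (simp add: lin_flow_def blinfun.scaleR_right)

lemma lin_flow_add: "lin_flow M t (v + w) = lin_flow M t v + lin_flow M t w"
  by (simp add: lin_flow_def blinfun.add_right)

text \<open>Uniqueness: every forward solution of v' = M v is the flow of its initial value, since
  exp (- s M) y s has derivative zero.\<close>

lemma lin_flow_unique:
  assumes sol: "\<And>s. s \<ge> 0 \<Longrightarrow> (y has_vector_derivative eop M (y s)) (at s within {0..})"
    and "t \<ge> 0"
  shows "y t = lin_flow M t (y 0)"
proof -
  define g where "g s = lin_flow (- M) s (y s)" for s
  have "(g has_vector_derivative 0) (at s within {0..})" if "s \<in> {0..}" for s
  proof -
    have "((\<lambda>t. exp (t *\<^sub>R (- M))) has_vector_derivative exp (s *\<^sub>R (- M)) * (- M)) (at s within {0..})"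
      by (rule exp_scaleR_has_vector_derivative_right)
    from bounded_bilinear.has_vector_derivative[OF bounded_bilinear_eop this sol] that
    show ?thesis
      unfolding g_def lin_flow_def by (simp add: eop_mult eop_minus)
  qed
  then have "g t = g 0"
    using has_vector_derivative_zero_constant[of "{0..}" g] \<open>t \<ge> 0\<close>
    by auto
  then have g_t: "g t = y 0"
    by (simp add: g_def)
  have "y t = eop (exp (t *\<^sub>R M) * exp (t *\<^sub>R (- M))) (y t)"
    by (simp add: exp_add_commuting[symmetric] eop_one)
  also have "\<dots> = lin_flow M t (g t)"
    by (simp add: eop_mult g_def lin_flow_def)
  finally show ?thesis
    using g_t by simp
qed

lemma lin_flow_shift:
  "lin_flow M t v = exp (- (c * t)) *\<^sub>R lin_flow (M + c *\<^sub>R 1) t v"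
proof -
  have "exp ((t * c) *\<^sub>R (1 :: 'a endo)) = exp (c * t) *\<^sub>R 1"
    using exp_of_real[of "t * c", where 'a="'a endo"] by (simp add: of_real_def mult.commute)
  then have "exp (t *\<^sub>R (M + c *\<^sub>R 1)) = exp (c * t) *\<^sub>R exp (t *\<^sub>R M)"
    by (simp add: scaleR_add_right exp_add_commuting)
  then show ?thesis
    by (simp add: lin_flow_def eop_scaleR exp_minus_inverse exp_minus)
qed

lemma lin_flow_sums: "(\<lambda>k. (t ^ k / fact k) *\<^sub>R eop (M ^ k) v) sums lin_flow M t v"
proof -
  have "(\<lambda>k. (t *\<^sub>R M) ^ k /\<^sub>R fact k) sums exp (t *\<^sub>R M)"
    by (rule exp_converges)
  from bounded_linear.sums[OF bounded_linear_eop this, of v]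
  show ?thesis by (simp add: lin_flow_def eop_scaleR divide_inverse_commute)
qed

definition Mop :: "real^'n^'n \<Rightarrow> (real^'n) endo" where
  "Mop A = Endo (Blinfun (\<lambda>v. A *v v))"

lemma eop_Mop: "eop (Mop A) v = A *v v"
  unfolding Mop_def by (simp add: Endo_inverse bounded_linear_Blinfun_apply)

lemma invariant_set_iff_flow:
  "invariant_set A S \<longleftrightarrow> (\<forall>t\<ge>0. \<forall>p\<in>S. lin_flow (Mop A) t p \<in> S)"
proof
  assume inv: "invariant_set A S"
  show "\<forall>t\<ge>0. \<forall>p\<in>S. lin_flow (Mop A) t p \<in> S"
  proof (intro allI impI ballI)
    fix t :: real and p assume "t \<ge> 0" "p \<in> S"
    have "lin_solution A (\<lambda>t. lin_flow (Mop A) t p)"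
      unfolding lin_solution_def using lin_flow_has_derivative[of "Mop A"] by (simp add: eop_Mop)
    with inv \<open>p \<in> S\<close> \<open>t \<ge> 0\<close> show "lin_flow (Mop A) t p \<in> S"
      unfolding invariant_set_def by fastforce
  qed
next
  assume flow: "\<forall>t\<ge>0. \<forall>p\<in>S. lin_flow (Mop A) t p \<in> S"
  show "invariant_set A S"
    unfolding invariant_set_def
  proof (intro allI impI)
    fix y and t :: real assume "lin_solution A y" "y 0 \<in> S" "t \<ge> 0"
    then have "y t = lin_flow (Mop A) t (y 0)"
      by (intro lin_flow_unique) (simp_all add: lin_solution_def eop_Mop)
    with flow \<open>y 0 \<in> S\<close> \<open>t \<ge> 0\<close> show "y t \<in> S" by simp
  qed
qed

lemma sum_unit_scaleR:
  fixes g :: "nat \<Rightarrow> 'a::real_vector"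
  assumes "j < m"
  shows "(\<Sum>i<m. (if i = j then c else 0) *\<^sub>R g i) = c *\<^sub>R g j"
proof -
  have "(\<Sum>i<m. (if i = j then c else 0) *\<^sub>R g i) = (\<Sum>i<m. if i = j then c *\<^sub>R g j else 0)"
    by (rule sum.cong) auto
  with assms show ?thesis by simp
qed

definition cone_of :: "(nat \<Rightarrow> 'a::real_vector) \<Rightarrow> nat \<Rightarrow> 'a set" where
  "cone_of g m = {\<Sum>i<m. a i *\<^sub>R g i | a. \<forall>i<m. 0 \<le> a i}"

lemma cone_ofI: "(\<And>i. i < m \<Longrightarrow> 0 \<le> a i) \<Longrightarrow> (\<Sum>i<m. a i *\<^sub>R g i) \<in> cone_of g m"
  unfolding cone_of_def by blast

lemma generator_in_cone_of: "j < m \<Longrightarrow> g j \<in> cone_of g m"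
  using cone_ofI[of m "\<lambda>i. if i = j then 1 else 0" g] by (simp add: sum_unit_scaleR)

lemma convex_cone_cone_of: "convex_cone (cone_of g m)"
  unfolding convex_cone_iff
proof (intro conjI ballI allI impI)
  show "0 \<in> cone_of g m"
    unfolding cone_of_def by (intro CollectI exI[of _ "\<lambda>_. 0"]) simp
next
  fix p q assume "p \<in> cone_of g m" "q \<in> cone_of g m"
  then obtain a b where "p = (\<Sum>i<m. a i *\<^sub>R g i)" "\<forall>i<m. 0 \<le> a i"
    "q = (\<Sum>i<m. b i *\<^sub>R g i)" "\<forall>i<m. 0 \<le> b i"
    unfolding cone_of_def by blast
  then show "p + q \<in> cone_of g m"
    unfolding cone_of_def
    by (intro CollectI exI[of _ "\<lambda>i. a i + b i"]) (simp add: scaleR_add_left sum.distrib)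
next
  fix p and c :: real assume "p \<in> cone_of g m" "c \<ge> 0"
  then obtain a where "p = (\<Sum>i<m. a i *\<^sub>R g i)" "\<forall>i<m. 0 \<le> a i"
    unfolding cone_of_def by blast
  with \<open>c \<ge> 0\<close> show "c *\<^sub>R p \<in> cone_of g m"
    unfolding cone_of_def by (intro CollectI exI[of _ "\<lambda>i. c * a i"]) (simp add: scaleR_sum_right)
qed

lemma convex_cone_nonneg_comb:
  assumes "convex_cone K" "finite I" "\<And>i. i \<in> I \<Longrightarrow> 0 \<le> a i" "\<And>i. i \<in> I \<Longrightarrow> v i \<in> K"
  shows "(\<Sum>i\<in>I. a i *\<^sub>R v i) \<in> K"
  using assms(2-4)
proof (induction I rule: finite_induct)
  case empty
  then show ?case using assms(1) by (simp add: convex_cone_iff)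
next
  case (insert j I)
  then show ?case using assms(1) by (simp add: convex_cone_add convex_cone_scaleR)
qed

text \<open>Finitely generated cones are closed (Minkowski-Weyl, from the library).\<close>

lemma cone_of_eq_hull: "cone_of g m = convex_cone hull (g ` {..<m})"
proof
  show "cone_of g m \<subseteq> convex_cone hull (g ` {..<m})"
    unfolding cone_of_def
    by (auto intro: convex_cone_nonneg_comb[OF convex_cone_convex_cone_hull] hull_inc)
  show "convex_cone hull (g ` {..<m}) \<subseteq> cone_of g m"
    by (rule hull_minimal) (auto simp: generator_in_cone_of convex_cone_cone_of)
qed

lemma closed_cone_of: "closed (cone_of (g :: nat \<Rightarrow> 'a::euclidean_space) m)"
  unfolding cone_of_eq_hull by (rule closed_convex_cone_hull) simp

lemma linear_image_cone_of:
  assumes "linear f" "\<And>j. j < m \<Longrightarrow> f (g j) \<in> cone_of g m" "v \<in> cone_of g m"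
  shows "f v \<in> cone_of g m"
proof -
  obtain a where "v = (\<Sum>i<m. a i *\<^sub>R g i)" "\<forall>i<m. 0 \<le> a i"
    using assms(3) unfolding cone_of_def by blast
  then have "f v = (\<Sum>i<m. a i *\<^sub>R f (g i))"
    using assms(1) by (simp add: linear_sum linear_scale)
  also have "\<dots> \<in> cone_of g m"
    using \<open>\<forall>i<m. 0 \<le> a i\<close> assms(2)
    by (intro convex_cone_nonneg_comb[OF convex_cone_cone_of]) auto
  finally show ?thesis .
qed

text \<open>If M sends every generator into the cone, so does every power of M, and hence so does
  exp (t M) = \<Sum>k. t^k/k! M^k for t \<ge> 0, by closedness of the cone.\<close>

lemma lin_flow_preserves_cone:
  fixes g :: "nat \<Rightarrow> 'a::euclidean_space"
  assumes gen: "\<And>j. j < m \<Longrightarrow> eop M (g j) \<in> cone_of g m"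
    and "t \<ge> 0" and v: "v \<in> cone_of g m"
  shows "lin_flow M t v \<in> cone_of g m"
proof -
  have M_cone: "eop M w \<in> cone_of g m" if "w \<in> cone_of g m" for w
    using linear_image_cone_of[OF bounded_linear.linear[OF blinfun.bounded_linear_right] gen that] .
  have powers: "eop (M ^ k) v \<in> cone_of g m" for k
    by (induction k) (simp_all add: v eop_one eop_mult M_cone)
  define S where "S n = (\<Sum>k<n. (t ^ k / fact k) *\<^sub>R eop (M ^ k) v)" for n
  have "S n \<in> cone_of g m" for n
    unfolding S_def using \<open>t \<ge> 0\<close> powers
    by (intro convex_cone_nonneg_comb[OF convex_cone_cone_of]) auto
  moreover have "S \<longlonglongrightarrow> lin_flow M t v"
    using lin_flow_sums[of t M v] unfolding sums_def S_def .
  ultimately show ?thesis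
    by (rule closed_sequentially[OF closed_cone_of])
qed

definition metzler :: "nat \<Rightarrow> (nat \<Rightarrow> nat \<Rightarrow> real) \<Rightarrow> bool" where
  "metzler m L \<longleftrightarrow> (\<forall>i<m. \<forall>j<m. i \<noteq> j \<longrightarrow> 0 \<le> L i j)"

text \<open>Sufficiency: for c \<ge> max |L j j| the shifted matrix L + c I is entrywise nonnegative,
  so M + c I maps generators into the cone, and exp (t M) = exp (- c t) exp (t (M + c I)).\<close>

lemma cone_invariant_if_metzler:
  fixes g :: "nat \<Rightarrow> 'a::euclidean_space"
  assumes L: "metzler m L" and cols: "\<And>j. j < m \<Longrightarrow> eop M (g j) = (\<Sum>i<m. L i j *\<^sub>R g i)"
    and "t \<ge> 0" and "v \<in> cone_of g m"
  shows "lin_flow M t v \<in> cone_of g m"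
proof -
  define c where "c = (\<Sum>j<m. \<bar>L j j\<bar>)"
  have shifted_cols: "eop (M + c *\<^sub>R 1) (g j) \<in> cone_of g m" if "j < m" for j
  proof -
    have "\<bar>L j j\<bar> \<le> c"
      unfolding c_def using that by (intro member_le_sum) auto
    then have nonneg: "0 \<le> L i j + (if i = j then c else 0)" if "i < m" for i
      using L \<open>i < m\<close> \<open>j < m\<close> unfolding metzler_def by auto
    have "eop (M + c *\<^sub>R 1) (g j) = (\<Sum>i<m. (L i j + (if i = j then c else 0)) *\<^sub>R g i)"
      using that cols by (simp add: eop_add eop_scaleR eop_one scaleR_add_left sum.distrib sum_unit_scaleR)
    also have "\<dots> \<in> cone_of g m"
      using nonneg by (rule cone_ofI)
    finally show ?thesis .
  qed
  have "lin_flow (M + c *\<^sub>R 1) t v \<in> cone_of g m"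
    using lin_flow_preserves_cone[OF shifted_cols] assms(3,4) by blast
  then show ?thesis
    unfolding lin_flow_shift[of M t v c] by (simp add: convex_cone_scaleR[OF convex_cone_cone_of])
qed

lemma right_derivative_in_closed:
  fixes f :: "real \<Rightarrow> 'a::real_normed_vector"
  assumes deriv: "(f has_vector_derivative D) (at 0 within {0<..})"
    and "closed K" and quotients: "\<And>s. s > 0 \<Longrightarrow> (f s - f 0) /\<^sub>R s \<in> K"
  shows "D \<in> K"
proof -
  from deriv have "((\<lambda>s. (1 / norm (s - 0)) *\<^sub>R (f s - (f 0 + (s - 0) *\<^sub>R D)) + D) \<longlongrightarrow> 0 + D)
      (at_right 0)"
    unfolding has_vector_derivative_def has_derivative_within by (intro tendsto_add) auto
  moreover have "\<forall>\<^sub>F s in at_right 0.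
      (1 / norm (s - 0)) *\<^sub>R (f s - (f 0 + (s - 0) *\<^sub>R D)) + D = (f s - f 0) /\<^sub>R s"
    using eventually_at_right_less[of "0::real"]
    by eventually_elim (simp add: scaleR_diff_right scaleR_add_right divide_inverse)
  ultimately have lim: "((\<lambda>s. (f s - f 0) /\<^sub>R s) \<longlongrightarrow> D) (at_right 0)"
    by (simp add: Lim_transform_eventually)
  have "\<forall>\<^sub>F s in at_right 0. (f s - f 0) /\<^sub>R s \<in> K"
    using eventually_at_right_less[of "0::real"] by eventually_elim (rule quotients)
  from Lim_in_closed_set[OF \<open>closed K\<close> this _ lim] show ?thesis by simp
qed

text \<open>Necessity, column by column: the quotients (exp (s M) g j - g j) / s lie in the cone
  generated by the g i together with - g j, and so does their limit M (g j).\<close>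

lemma cone_invariant_column:
  fixes g :: "nat \<Rightarrow> 'a::euclidean_space"
  assumes inv: "\<And>t v. t \<ge> 0 \<Longrightarrow> v \<in> cone_of g m \<Longrightarrow> lin_flow M t v \<in> cone_of g m"
    and "j < m"
  shows "\<exists>a. (\<forall>i\<le>m. 0 \<le> a i) \<and> eop M (g j) = (\<Sum>i<m. a i *\<^sub>R g i) - a m *\<^sub>R g j"
proof -
  define h where "h = g(m := - g j)"
  have h_sum: "(\<Sum>i<Suc m. a i *\<^sub>R h i) = (\<Sum>i<m. a i *\<^sub>R g i) - a m *\<^sub>R g j" for a
  proof -
    have "(\<Sum>i<m. a i *\<^sub>R h i) = (\<Sum>i<m. a i *\<^sub>R g i)"
      unfolding h_def by (rule sum.cong) auto
    then show ?thesis by (simp add: h_def)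
  qed
  have deriv: "((\<lambda>s. lin_flow M s (g j)) has_vector_derivative eop M (g j)) (at 0 within {0<..})"
    using lin_flow_has_derivative[of M "g j" 0] by simp
  have "eop M (g j) \<in> cone_of h (Suc m)"
  proof (rule right_derivative_in_closed[OF deriv closed_cone_of])
    fix s :: real assume "s > 0"
    then have "lin_flow M s (g j) \<in> cone_of g m"
      using inv generator_in_cone_of[OF \<open>j < m\<close>, of g] by simp
    then obtain a where a: "\<forall>i<m. 0 \<le> a i" "lin_flow M s (g j) = (\<Sum>i<m. a i *\<^sub>R g i)"
      unfolding cone_of_def by blast
    define b where "b i = (if i < m then a i / s else 1 / s)" for i
    have "(\<Sum>i<m. b i *\<^sub>R g i) = (\<Sum>i<m. (a i / s) *\<^sub>R g i)"
      unfolding b_def by (rule sum.cong) auto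
    then have "(\<Sum>i<Suc m. b i *\<^sub>R h i) = (lin_flow M s (g j) - g j) /\<^sub>R s"
      unfolding h_sum a(2)
      by (simp add: b_def scaleR_sum_right scaleR_diff_right divide_inverse_commute)
    then have "(lin_flow M s (g j) - lin_flow M 0 (g j)) /\<^sub>R s = (\<Sum>i<Suc m. b i *\<^sub>R h i)"
      by simp
    also have "\<dots> \<in> cone_of h (Suc m)"
      using \<open>s > 0\<close> a(1) by (intro cone_ofI) (simp add: b_def)
    finally show "(lin_flow M s (g j) - lin_flow M 0 (g j)) /\<^sub>R s \<in> cone_of h (Suc m)" .
  qed
  then obtain a where "\<forall>i<Suc m. 0 \<le> a i" "eop M (g j) = (\<Sum>i<m. a i *\<^sub>R g i) - a m *\<^sub>R g j"
    unfolding cone_of_def h_sum by blast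
  then show ?thesis
    by (intro exI[of _ a]) simp
qed

lemma metzler_of_cone_invariant:
  fixes g :: "nat \<Rightarrow> 'a::euclidean_space"
  assumes inv: "\<And>t v. t \<ge> 0 \<Longrightarrow> v \<in> cone_of g m \<Longrightarrow> lin_flow M t v \<in> cone_of g m"
  shows "\<exists>L. metzler m L \<and> (\<forall>j<m. eop M (g j) = (\<Sum>i<m. L i j *\<^sub>R g i))"
proof -
  have "\<forall>j\<in>{..<m}. \<exists>b. (\<forall>i\<le>m. 0 \<le> b i) \<and>
      eop M (g j) = (\<Sum>i<m. b i *\<^sub>R g i) - b m *\<^sub>R g j"
    using cone_invariant_column[OF inv] by simp
  from bchoice[OF this] obtain a where a: "\<And>j. j < m \<Longrightarrow>
      (\<forall>i\<le>m. 0 \<le> a j i) \<and> eop M (g j) = (\<Sum>i<m. a j i *\<^sub>R g i) - a j m *\<^sub>R g j"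
    by auto
  define L where "L i j = a j i - (if i = j then a j m else 0)" for i j
  have "metzler m L"
    unfolding metzler_def
  proof (intro allI impI)
    fix i j assume "i < m" "j < m" "i \<noteq> j"
    with a[OF \<open>j < m\<close>] show "0 \<le> L i j" by (simp add: L_def)
  qed
  moreover have "eop M (g j) = (\<Sum>i<m. L i j *\<^sub>R g i)" if "j < m" for j
    using a[OF that] that
    by (simp add: L_def scaleR_diff_left sum_subtractf sum_unit_scaleR)
  ultimately show ?thesis by blast
qed

theorem cone_invariant_iff_metzler:
  fixes g :: "nat \<Rightarrow> 'a::euclidean_space"
  shows "(\<forall>t\<ge>0. \<forall>v\<in>cone_of g m. lin_flow M t v \<in> cone_of g m) \<longleftrightarrow>
    (\<exists>L. metzler m L \<and> (\<forall>j<m. eop M (g j) = (\<Sum>i<m. L i j *\<^sub>R g i)))"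
proof
  assume "\<forall>t\<ge>0. \<forall>v\<in>cone_of g m. lin_flow M t v \<in> cone_of g m"
  then show "\<exists>L. metzler m L \<and> (\<forall>j<m. eop M (g j) = (\<Sum>i<m. L i j *\<^sub>R g i))"
    by (intro metzler_of_cone_invariant) simp
next
  assume "\<exists>L. metzler m L \<and> (\<forall>j<m. eop M (g j) = (\<Sum>i<m. L i j *\<^sub>R g i))"
  then show "\<forall>t\<ge>0. \<forall>v\<in>cone_of g m. lin_flow M t v \<in> cone_of g m"
    using cone_invariant_if_metzler by blast
qed

definition hlift :: "'a::euclidean_space endo \<Rightarrow> ('a \<times> real) endo" where
  "hlift M = Endo (Blinfun (\<lambda>z. (eop M (fst z), 0)))"

lemma eop_hlift: "eop (hlift M) z = (eop M (fst z), 0)"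
proof -
  have lin: "bounded_linear (\<lambda>z. (eop M (fst z), 0 :: real))"
    by (intro bounded_linear_Pair bounded_linear_compose[OF blinfun.bounded_linear_right]
        bounded_linear_fst bounded_linear_zero)
  show ?thesis
    unfolding hlift_def by (simp add: Endo_inverse bounded_linear_Blinfun_apply[OF lin])
qed

lemma lin_flow_hlift:
  assumes "t \<ge> 0"
  shows "lin_flow (hlift M) t (v, r) = (lin_flow M t v, r)"
proof -
  have "((\<lambda>s. (lin_flow M s v, r)) has_vector_derivative eop (hlift M) (lin_flow M s v, r))
      (at s within {0..})" for s
    unfolding eop_hlift fst_conv
    by (intro has_vector_derivative_Pair lin_flow_has_derivative has_vector_derivative_const)
  from lin_flow_unique[where y="\<lambda>s. (lin_flow M s v, r)", OF this assms] show ?thesis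
    by simp
qed

lemma sum_split_add: "(\<Sum>k<a + (b::nat). f k) = (\<Sum>k<a. f k) + (\<Sum>k<b. f (a + k))"
  by (induction b) (simp_all add: add.assoc)

definition hgen :: "nat \<Rightarrow> (nat \<Rightarrow> real^'n) \<Rightarrow> (nat \<Rightarrow> real^'n) \<Rightarrow> nat \<Rightarrow> (real^'n) \<times> real" where
  "hgen l1 x xh i = (Xcol l1 x xh i, if i < l1 then 1 else 0)"

abbreviation hcone :: "nat \<Rightarrow> nat \<Rightarrow> (nat \<Rightarrow> real^'n) \<Rightarrow> (nat \<Rightarrow> real^'n) \<Rightarrow> ((real^'n) \<times> real) set" where
  "hcone l1 l2 x xh \<equiv> cone_of (hgen l1 x xh) (l1 + l2)"

lemma sum_hgen:
  "(\<Sum>i<l1 + l2. w i *\<^sub>R hgen l1 x xh i) = (\<Sum>i<l1 + l2. w i *\<^sub>R Xcol l1 x xh i, \<Sum>i<l1. w i)"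
proof -
  have "(\<Sum>i<l1. w i * (if i < l1 then 1 else 0)) = (\<Sum>i<l1. w i)"
    by (rule sum.cong) auto
  then show ?thesis
    by (simp add: hgen_def prod_eq_iff fst_sum snd_sum sum_split_add)
qed

lemma hcone_iff:
  "(v, r) \<in> hcone l1 l2 x xh \<longleftrightarrow>
    (\<exists>w. (\<forall>i<l1 + l2. 0 \<le> w i) \<and> (\<Sum>i<l1. w i) = r \<and> v = (\<Sum>i<l1 + l2. w i *\<^sub>R Xcol l1 x xh i))"
  unfolding cone_of_def sum_hgen by auto

lemma poly_set_hcone: "p \<in> poly_set l1 l2 x xh \<longleftrightarrow> (p, 1) \<in> hcone l1 l2 x xh"
proof
  assume "p \<in> poly_set l1 l2 x xh"
  then obtain \<theta> \<theta>h where p: "p = (\<Sum>i<l1. \<theta> i *\<^sub>R x i) + (\<Sum>j<l2. \<theta>h j *\<^sub>R xh j)"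
      "\<forall>i<l1. 0 \<le> \<theta> i" "(\<Sum>i<l1. \<theta> i) = 1" "\<forall>j<l2. 0 \<le> \<theta>h j"
    unfolding poly_set_def by blast
  define w where "w i = (if i < l1 then \<theta> i else \<theta>h (i - l1))" for i
  have "\<forall>i<l1 + l2. 0 \<le> w i" "(\<Sum>i<l1. w i) = 1" "p = (\<Sum>i<l1 + l2. w i *\<^sub>R Xcol l1 x xh i)"
    using p by (auto simp: w_def Xcol_def sum_split_add)
  then show "(p, 1) \<in> hcone l1 l2 x xh"
    unfolding hcone_iff by blast
next
  assume "(p, 1) \<in> hcone l1 l2 x xh"
  then obtain w where "\<forall>i<l1 + l2. 0 \<le> w i" "(\<Sum>i<l1. w i) = 1"
      "p = (\<Sum>i<l1 + l2. w i *\<^sub>R Xcol l1 x xh i)"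
    unfolding hcone_iff by blast
  then show "p \<in> poly_set l1 l2 x xh"
    unfolding poly_set_def
    by (intro CollectI exI[of _ w] exI[of _ "\<lambda>j. w (l1 + j)"]) (simp add: Xcol_def sum_split_add)
qed

lemma hcone_slice:
  assumes "r > 0"
  shows "(v, r) \<in> hcone l1 l2 x xh \<longleftrightarrow> v /\<^sub>R r \<in> poly_set l1 l2 x xh"
proof -
  have "(v, r) = r *\<^sub>R (v /\<^sub>R r, 1)" "(v /\<^sub>R r, 1) = inverse r *\<^sub>R (v, r)"
    using assms by simp_all
  then show ?thesis
    unfolding poly_set_hcone using assms
    by (metis convex_cone_scaleR[OF convex_cone_cone_of] inverse_nonnegative_iff_nonnegative less_imp_le)
qed

lemma hcone_height_nonneg:
  assumes "z \<in> hcone l1 l2 x xh"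
  shows "0 \<le> snd z"
proof -
  obtain w where "\<forall>i<l1 + l2. 0 \<le> w i" "(\<Sum>i<l1. w i) = snd z"
    using assms hcone_iff[where v="fst z" and r="snd z"] by auto
  then show ?thesis
    by (metis sum_nonneg trans_less_add1 lessThan_iff)
qed

text \<open>Points of the cone at positive height are rescaled points of the polyhedron;
  points at height 0 (the recession directions) are limits of points at positive height, obtained
  by adding small multiples of the generator of the first vertex.\<close>

lemma hcone_invariant_if_poly_invariant:
  fixes M :: "(real^'n) endo"
  assumes "l1 \<ge> 1" and poly: "\<And>t p. t \<ge> 0 \<Longrightarrow> p \<in> poly_set l1 l2 x xh \<Longrightarrow>
      lin_flow M t p \<in> poly_set l1 l2 x xh"
    and "t \<ge> 0" and z: "z \<in> hcone l1 l2 x xh"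
  shows "lin_flow (hlift M) t z \<in> hcone l1 l2 x xh"
proof -
  let ?g0 = "hgen l1 x xh 0" and ?F = "lin_flow (hlift M) t"
  have positive: "?F z' \<in> hcone l1 l2 x xh" if "z' \<in> hcone l1 l2 x xh" "snd z' > 0" for z'
    using that poly \<open>t \<ge> 0\<close> prod.collapse[of z']
    by (metis hcone_slice lin_flow_hlift lin_flow_scaleR)
  define e where "e n = inverse (real (Suc n))" for n
  have "?g0 \<in> hcone l1 l2 x xh" "snd ?g0 = 1"
    using \<open>l1 \<ge> 1\<close> generator_in_cone_of[of 0 "l1 + l2" "hgen l1 x xh"] by (simp_all add: hgen_def)
  with z hcone_height_nonneg[OF z] have "?F (z + e n *\<^sub>R ?g0) \<in> hcone l1 l2 x xh" for n
    by (intro positive convex_cone_add[OF convex_cone_cone_of] convex_cone_scaleR[OF convex_cone_cone_of])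
      (simp_all add: e_def add_nonneg_pos)
  moreover have "(\<lambda>n. ?F (z + e n *\<^sub>R ?g0)) \<longlonglongrightarrow> ?F z"
  proof -
    have "(\<lambda>n. ?F z + e n *\<^sub>R ?F ?g0) \<longlonglongrightarrow> ?F z + 0 *\<^sub>R ?F ?g0"
      unfolding e_def by (intro tendsto_intros LIMSEQ_inverse_real_of_nat)
    then show ?thesis
      by (simp add: lin_flow_add lin_flow_scaleR)
  qed
  ultimately show ?thesis
    by (rule closed_sequentially[OF closed_cone_of])
qed

lemma poly_invariant_iff_hcone_invariant:
  fixes M :: "(real^'n) endo"
  assumes "l1 \<ge> 1"
  shows "(\<forall>t\<ge>0. \<forall>p\<in>poly_set l1 l2 x xh. lin_flow M t p \<in> poly_set l1 l2 x xh) \<longleftrightarrow>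
    (\<forall>t\<ge>0. \<forall>z\<in>hcone l1 l2 x xh. lin_flow (hlift M) t z \<in> hcone l1 l2 x xh)"
proof
  assume "\<forall>t\<ge>0. \<forall>p\<in>poly_set l1 l2 x xh. lin_flow M t p \<in> poly_set l1 l2 x xh"
  then show "\<forall>t\<ge>0. \<forall>z\<in>hcone l1 l2 x xh. lin_flow (hlift M) t z \<in> hcone l1 l2 x xh"
    using hcone_invariant_if_poly_invariant[OF assms] by blast
next
  assume "\<forall>t\<ge>0. \<forall>z\<in>hcone l1 l2 x xh. lin_flow (hlift M) t z \<in> hcone l1 l2 x xh"
  then show "\<forall>t\<ge>0. \<forall>p\<in>poly_set l1 l2 x xh. lin_flow M t p \<in> poly_set l1 l2 x xh"
    by (metis poly_set_hcone lin_flow_hlift)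
qed

lemma hlift_column_iff:
  "eop (hlift (Mop A)) (hgen l1 x xh j) = (\<Sum>k<l1 + l2. L k j *\<^sub>R hgen l1 x xh k) \<longleftrightarrow>
    (\<Sum>k<l1 + l2. L k j *\<^sub>R Xcol l1 x xh k) = A *v Xcol l1 x xh j \<and> (\<Sum>k<l1. L k j) = 0"
  unfolding sum_hgen by (auto simp: eop_hlift eop_Mop hgen_def)

theorem theorem3p8:
  fixes l1 l2 :: nat and x xh :: "nat \<Rightarrow> real^'n" and A :: "real^'n^'n"
  assumes "l1 \<ge> 1"
  shows "invariant_set A (poly_set l1 l2 x xh) \<longleftrightarrow>
    (\<exists>L :: nat \<Rightarrow> nat \<Rightarrow> real.
       (\<forall>i<l1+l2. \<forall>j<l1+l2. i \<noteq> j \<longrightarrow> L i j \<ge> 0) \<and>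
       (\<forall>j<l1+l2. (\<Sum>k<l1+l2. L k j *\<^sub>R Xcol l1 x xh k) = A *v Xcol l1 x xh j) \<and>
       (\<forall>j<l1+l2. (\<Sum>k<l1. L k j) = 0))"
proof -
  let ?P = "poly_set l1 l2 x xh" and ?K = "hcone l1 l2 x xh"
  have "invariant_set A ?P \<longleftrightarrow> (\<forall>t\<ge>0. \<forall>p\<in>?P. lin_flow (Mop A) t p \<in> ?P)"
    by (rule invariant_set_iff_flow)
  also have "\<dots> \<longleftrightarrow> (\<forall>t\<ge>0. \<forall>z\<in>?K. lin_flow (hlift (Mop A)) t z \<in> ?K)"
    by (rule poly_invariant_iff_hcone_invariant[OF assms])
  also have "\<dots> \<longleftrightarrow> (\<exists>L. metzler (l1 + l2) L \<and>
      (\<forall>j<l1 + l2. eop (hlift (Mop A)) (hgen l1 x xh j) = (\<Sum>k<l1 + l2. L k j *\<^sub>R hgen l1 x xh k)))"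
    by (rule cone_invariant_iff_metzler)
  also have "\<dots> \<longleftrightarrow> (\<exists>L :: nat \<Rightarrow> nat \<Rightarrow> real.
       (\<forall>i<l1+l2. \<forall>j<l1+l2. i \<noteq> j \<longrightarrow> L i j \<ge> 0) \<and>
       (\<forall>j<l1+l2. (\<Sum>k<l1+l2. L k j *\<^sub>R Xcol l1 x xh k) = A *v Xcol l1 x xh j) \<and>
       (\<forall>j<l1+l2. (\<Sum>k<l1. L k j) = 0))"
    by (simp add: metzler_def hlift_column_iff imp_conjR all_conj_distrib)
  finally show ?thesis .
qed

end
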